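(* Let $1\le p<2$, $f\in\mathcal H_0$, $u$ the solution of $\partial_tu+\partial J(u)\ni0$, $u(0)=f$, with extinction time $T_{\mathrm{ex}}$, and $w(t):=u(t)/a(t)$ with $a(t)=(1-t/T_{\mathrm{ex}})^{1/(2-p)}$. Assume $T_{\mathrm{ex}}=\frac{\|f\|^{2-p}}{(2-p)\lambda_1}$ and let $w_*$ be an asymptotic profile, i.e. $w_*\in\mathcal H$ with $w(t_k)\to w_*$ strongly for some $t_k\nearrow T_{\mathrm{ex}}$. Then $w_*$ is a ground state.
   Context: $\mathcal H$ is a real Hilbert space with inner product $\langle\cdot,\cdot\rangle$ and norm $\|\cdot\|$. $J:\mathcal H\to\mathbb R\cup\{\infty\}$ is convex, lower semicontinuous, proper, with dense effective domain, and absolutely $p$-homogeneous: $J(cu)=|c|^pJ(u)$ for $c\ne0$, $J(0)=0$. $\partial J(u)=\{\zeta: J(u)+\langle\zeta,v-u\rangle\le J(v)\ \forall v\}$; $\mathcal N(J)=\{u:J(u)=0\}$; $\mathcal H_0:=\mathcal N(J)^\perp\setminus\{0\}$. Rayleigh quotient $R(u):=pJ(u)/\|u\|^p$; standing coercivity assumption $\lambda_1:=\inf_{u\in\mathcal H_0}R(u)>0$; a ground state is a minimizer of $R$ over $\mathcal H_0$. The gradient flow solution (Brezis) is the unique continuous $u:[0,\infty)\to\mathcal H$, Lipschitz on $[\delta,\infty)$ for all $\delta>0$, right-differentiable on $(0,\infty)$ with $u(0)=f$ and $\partial_t^+u(t)=-\zeta(t)$, $\zeta(t)$ the minimal-norm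 element of $\partial J(u(t))$. $T_{\mathrm{ex}}:=\inf\{T>0:u(t)=0\ \forall t\ge T\}$. *)

theory Defs
  imports "HOL-Analysis.Analysis"
begin

definition convex_fun :: "('a::real_vector \<Rightarrow> ereal) \<Rightarrow> bool" where
  "convex_fun J \<longleftrightarrow> (\<forall>u v. \<forall>t::real. 0 \<le> t \<and> t \<le> 1 \<longrightarrow>
      J ((1 - t) *\<^sub>R u + t *\<^sub>R v) \<le> ereal (1 - t) * J u + ereal t * J v)"

definition lsc_fun :: "('a::topological_space \<Rightarrow> ereal) \<Rightarrow> bool" where
  "lsc_fun J \<longleftrightarrow> (\<forall>c::real. closed {u. J u \<le> ereal c})"

definition proper_fun :: "('a \<Rightarrow> ereal) \<Rightarrow> bool" where
  "proper_fun J \<longleftrightarrow> (\<forall>u. J u \<noteq> -\<infinity>) \<and> (\<exists>u. J u \<noteq> \<infinity>)"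

definition dense_domain :: "('a::topological_space \<Rightarrow> ereal) \<Rightarrow> bool" where
  "dense_domain J \<longleftrightarrow> closure {u. J u < \<infinity>} = UNIV"

definition abs_homogeneous :: "real \<Rightarrow> ('a::real_vector \<Rightarrow> ereal) \<Rightarrow> bool" where
  "abs_homogeneous p J \<longleftrightarrow> J 0 = 0 \<and>
      (\<forall>c u. c \<noteq> 0 \<longrightarrow> J (c *\<^sub>R u) = ereal (\<bar>c\<bar> powr p) * J u)"

definition subdiff :: "('a::real_inner \<Rightarrow> ereal) \<Rightarrow> 'a \<Rightarrow> 'a set" where
  "subdiff J u = {\<zeta>. \<forall>v. J u + ereal (\<zeta> \<bullet> (v - u)) \<le> J v}"

definition min_norm_subgrad :: "('a::real_inner \<Rightarrow> ereal) \<Rightarrow> 'a \<Rightarrow> 'a \<Rightarrow> bool" where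
  "min_norm_subgrad J u \<zeta> \<longleftrightarrow> \<zeta> \<in> subdiff J u \<and> (\<forall>\<eta>\<in>subdiff J u. norm \<zeta> \<le> norm \<eta>)"

definition nullspace_J :: "('a \<Rightarrow> ereal) \<Rightarrow> 'a set" where
  "nullspace_J J = {u. J u = 0}"

definition H0 :: "('a::real_inner \<Rightarrow> ereal) \<Rightarrow> 'a set" where
  "H0 J = orthogonal_comp (nullspace_J J) - {0}"

definition rayleigh :: "real \<Rightarrow> ('a::real_normed_vector \<Rightarrow> ereal) \<Rightarrow> 'a \<Rightarrow> ereal" where
  "rayleigh p J u = ereal p * J u / ereal (norm u powr p)"

definition lambda1 :: "real \<Rightarrow> ('a::real_inner \<Rightarrow> ereal) \<Rightarrow> ereal" where
  "lambda1 p J = (INF u\<in>H0 J. rayleigh p J u)"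

definition ground_state :: "real \<Rightarrow> ('a::real_inner \<Rightarrow> ereal) \<Rightarrow> 'a \<Rightarrow> bool" where
  "ground_state p J u \<longleftrightarrow> u \<in> H0 J \<and> rayleigh p J u = lambda1 p J"

definition gradient_flow_solution ::
    "('a::real_inner \<Rightarrow> ereal) \<Rightarrow> 'a \<Rightarrow> (real \<Rightarrow> 'a) \<Rightarrow> bool" where
  "gradient_flow_solution J f u \<longleftrightarrow>
     continuous_on {0..} u \<and>
     (\<forall>\<delta>>0. \<exists>L. L-lipschitz_on {\<delta>..} u) \<and>
     u 0 = f \<and>
     (\<forall>t>0. \<exists>\<zeta>. min_norm_subgrad J (u t) \<zeta> \<and>
             (u has_vector_derivative (- \<zeta>)) (at t within {t..}))"

definition extinction_time :: "(real \<Rightarrow> 'a::zero) \<Rightarrow> real" where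
  "extinction_time u = Inf {T. T > 0 \<and> (\<forall>t\<ge>T. u t = 0)}"

end

theory Submission
  imports Defs
begin

text \<open>Along the flow, u stays orthogonal to the null space of J, since subgradients of an
  absolutely homogeneous convex functional are. By the Euler inequality p J(v) \<le> \<langle>\<zeta>, v\<rangle> for
  \<zeta> \<in> \<partial>J(v) and the Rayleigh bound \<lambda> norm v powr p \<le> p J(v), where \<lambda> = lambda1 p J, the
  Lyapunov function \<psi>(t) = norm (u t) powr (2 - p) + (2 - p) \<lambda> t is nonincreasing up to the
  extinction time T. The hypothesis on T says \<psi>(0) = (2 - p) \<lambda> T \<le> \<psi>(T), so \<psi> is constant;
  then its right derivative vanishes, which forces p J(u t) \<le> \<lambda> norm (u t) powr p, i.e. every
  u t is a ground state, and norm (u t) = a(t) norm f. Hence the rescaled w(t) = u(t) / a(t) are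
  ground states with the norm of f, and by lower semicontinuity of J so is their limit w_star.\<close>

section \<open>Monotonicity from right derivatives\<close>

lemma right_DERIV_neg_imp_eventually_less:
  fixes h :: "real \<Rightarrow> real"
  assumes "(h has_real_derivative D) (at c within {c..})" and "D < 0"
  shows "eventually (\<lambda>x. h x < h c) (at_right c)"
proof -
  have "((\<lambda>x. (h x - h c) / (x - c)) \<longlongrightarrow> D) (at_right c)"
    using assms(1) by (simp add: has_field_derivative_iff at_within_Ici_at_right)
  then have "eventually (\<lambda>x. (h x - h c) / (x - c) < 0) (at_right c)"
    using assms(2) by (rule order_tendstoD)
  with eventually_at_right_less[of c] show ?thesis
    by eventually_elim (simp add: divide_less_0_iff)
qed

lemma right_DERIV_neg_imp_le:
  fixes h :: "real \<Rightarrow> real"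
  assumes "a \<le> b" and cont: "continuous_on {a..b} h"
    and deriv: "\<And>t. a < t \<Longrightarrow> t < b \<Longrightarrow>
      \<exists>D. (h has_real_derivative D) (at t within {t..}) \<and> D < 0"
  shows "h b \<le> h a"
proof (rule ccontr)
  assume "\<not> h b \<le> h a"
  then have "a < b" using \<open>a \<le> b\<close> by (auto simp: le_less)
  define m where "m = (h a + h b) / 2"
  have m: "h a < m" "m < h b" using \<open>\<not> h b \<le> h a\<close> by (simp_all add: m_def)
  \<comment> \<open>The last point c of [a, b] with h c \<le> m: to its right h exceeds m.\<close>
  have "compact {x \<in> {a..b}. h x \<le> m}"
    using compact_Int_closed[OF compact_Icc continuous_on_closed_Collect_le[OF cont continuous_on_const],
        of a b m]
    by (simp add: Int_absorb1 subset_iff)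
  moreover have "a \<in> {x \<in> {a..b}. h x \<le> m}" using \<open>a < b\<close> m by simp
  ultimately obtain c where c: "c \<in> {a..b}" "h c \<le> m"
    and c_max: "\<And>x. x \<in> {a..b} \<Longrightarrow> h x \<le> m \<Longrightarrow> x \<le> c"
    using compact_attains_sup[of "{x \<in> {a..b}. h x \<le> m}"] by blast
  have "c < b" using c m by (cases "c = b") auto
  then have "eventually (\<lambda>x. c < x \<and> x < b) (at_right c)"
    by (auto simp: eventually_at_right_field)
  then have above: "eventually (\<lambda>x. m < h x) (at_right c)"
  proof eventually_elim
    case (elim x)
    then have "x \<in> {a..b}" using c(1) by auto
    then show "m < h x" using c_max[of x] elim by fastforce
  qed
  have "eventually (\<lambda>x. h x < m) (at_right c)"
  proof (cases "c = a")
    case True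
    have "(h \<longlongrightarrow> h a) (at_right a)"
      using cont \<open>a < b\<close>
      unfolding continuous_on_def at_within_Icc_at_right[OF \<open>a < b\<close>, symmetric] by simp
    then show ?thesis unfolding True using m(1) by (rule order_tendstoD)
  next
    case False
    then obtain D where "(h has_real_derivative D) (at c within {c..})" "D < 0"
      using deriv \<open>c < b\<close> c(1) by force
    from right_DERIV_neg_imp_eventually_less[OF this] show ?thesis
      by eventually_elim (use c(2) in simp)
  qed
  with above have "eventually (\<lambda>x. False) (at_right c)" by eventually_elim simp
  then show False by simp
qed

lemma right_DERIV_nonpos_imp_nonincreasing:
  fixes g :: "real \<Rightarrow> real"
  assumes "a \<le> b" and cont: "continuous_on {a..b} g"
    and deriv: "\<And>t. a < t \<Longrightarrow> t < b \<Longrightarrow>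
      \<exists>D. (g has_real_derivative D) (at t within {t..}) \<and> D \<le> 0"
  shows "g b \<le> g a"
proof (rule field_le_epsilon)
  fix e :: real assume "0 < e"
  define \<epsilon> where "\<epsilon> = e / (b - a + 1)"
  have "0 < \<epsilon>" using \<open>0 < e\<close> \<open>a \<le> b\<close> by (simp add: \<epsilon>_def)
  have "g b - \<epsilon> * b \<le> g a - \<epsilon> * a"
  proof (rule right_DERIV_neg_imp_le[where h = "\<lambda>x. g x - \<epsilon> * x"])
    show "continuous_on {a..b} (\<lambda>x. g x - \<epsilon> * x)" by (intro continuous_intros cont)
    fix t assume "a < t" "t < b"
    then obtain D where "(g has_real_derivative D) (at t within {t..})" "D \<le> 0" using deriv by blast
    then show "\<exists>D. ((\<lambda>x. g x - \<epsilon> * x) has_real_derivative D) (at t within {t..}) \<and> D < 0"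
      using \<open>0 < \<epsilon>\<close>
      by (intro exI[of _ "D - \<epsilon>"]) (auto intro!: derivative_eq_intros)
  qed fact
  moreover have "\<epsilon> * (b - a) \<le> e"
    using \<open>0 < e\<close> \<open>a \<le> b\<close> by (simp add: \<epsilon>_def field_simps)
  ultimately show "g b \<le> g a + e" by (simp add: algebra_simps)
qed

section \<open>Absolutely homogeneous convex functionals\<close>

lemma abs_homogeneous_scaleR:
  assumes "abs_homogeneous p J"
  shows "J (c *\<^sub>R u) = ereal (\<bar>c\<bar> powr p) * J u"
  using assms by (cases "c = 0") (auto simp: abs_homogeneous_def)

lemma abs_homogeneous_uminus:
  assumes "abs_homogeneous p J"
  shows "J (- u) = J u"
  using abs_homogeneous_scaleR[OF assms, of "-1" u] by simp

lemma convex_abs_homogeneous_nonneg: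
  assumes "convex_fun J" and "abs_homogeneous p J"
  shows "0 \<le> J u"
proof -
  have "J ((1 - 1/2) *\<^sub>R u + (1/2) *\<^sub>R (- u)) \<le> ereal (1 - 1/2) * J u + ereal (1/2) * J (- u)"
    by (rule assms(1)[unfolded convex_fun_def, rule_format]) simp
  then have "0 \<le> ereal (1/2) * J u + ereal (1/2) * J u"
    using assms(2) abs_homogeneous_uminus[OF assms(2)] by (simp add: abs_homogeneous_def)
  then show ?thesis by (cases "J u") auto
qed

lemma subdiff_imp_finite:
  assumes "proper_fun J" and "\<zeta> \<in> subdiff J u"
  shows "J u \<noteq> \<infinity>"
proof
  assume "J u = \<infinity>"
  moreover obtain v where "J v \<noteq> \<infinity>" using assms(1) by (auto simp: proper_fun_def)
  moreover have "J u + ereal (\<zeta> \<bullet> (v - u)) \<le> J v" using assms(2) by (auto simp: subdiff_def)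
  ultimately show False by simp
qed

lemma subdiff_le_inner_self:
  assumes "J 0 = 0" and "\<zeta> \<in> subdiff J u"
  shows "J u \<le> ereal (\<zeta> \<bullet> u)"
proof -
  have "J u + ereal (\<zeta> \<bullet> (0 - u)) \<le> J 0" using assms(2) unfolding subdiff_def by blast
  then show ?thesis using assms(1) by (cases "J u") auto
qed

lemma subdiff_euler_ineq:
  assumes "abs_homogeneous p J" and \<zeta>: "\<zeta> \<in> subdiff J u" and r: "J u = ereal r"
  shows "p * r \<le> \<zeta> \<bullet> u"
proof -
  \<comment> \<open>Test the subgradient inequality against c u with c \<rightarrow> 1 from below.\<close>
  have quotient_le: "(c powr p - 1) / (c - 1) * r \<le> \<zeta> \<bullet> u" if c: "0 < c" "c < 1" for c
  proof -
    have "J u + ereal (\<zeta> \<bullet> (c *\<^sub>R u - u)) \<le> J (c *\<^sub>R u)"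
      using \<zeta> unfolding subdiff_def by blast
    then have "r + (c - 1) * (\<zeta> \<bullet> u) \<le> c powr p * r"
      using r c abs_homogeneous_scaleR[OF assms(1)] by (simp add: inner_diff_right algebra_simps)
    then have "(1 - c powr p) * r \<le> (1 - c) * (\<zeta> \<bullet> u)" by (simp add: algebra_simps)
    then have "(1 - c powr p) / (1 - c) * r \<le> \<zeta> \<bullet> u" using c by (simp add: field_simps)
    then show ?thesis by (metis minus_diff_eq minus_divide_divide)
  qed
  have "((\<lambda>c. c powr p) has_real_derivative p * 1 powr (p - 1)) (at 1)"
    by (rule has_real_derivative_powr) simp
  then have "((\<lambda>c. (c powr p - 1) / (c - 1)) \<longlongrightarrow> p) (at_left 1)"
    by (simp add: has_field_derivative_iff filterlim_at_split)
  then have "((\<lambda>c. (c powr p - 1) / (c - 1) * r) \<longlongrightarrow> p * r) (at_left 1)"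
    by (intro tendsto_intros)
  moreover have "eventually (\<lambda>c. (c powr p - 1) / (c - 1) * r \<le> \<zeta> \<bullet> u) (at_left 1)"
    using eventually_at_left_real[OF zero_less_one]
    by eventually_elim (rule quotient_le; simp)
  ultimately show ?thesis by (rule tendsto_upperbound) simp
qed

lemma abs_homogeneous_add_null_le:
  assumes convex: "convex_fun J" and hom: "abs_homogeneous p J" and n: "J n = 0"
  shows "J (u + n) \<le> J u"
proof (cases "J u")
  case (real r)
  \<comment> \<open>u + n = \<theta> (u / \<theta>) + (1 - \<theta>) (n / (1 - \<theta>)), and J vanishes at the second point.\<close>
  have le: "J (u + n) \<le> ereal (\<theta> * (1/\<theta>) powr p * r)" if \<theta>: "0 < \<theta>" "\<theta> < 1" for \<theta>
  proof -
    define v where "v = (1 - (1 - \<theta>)) *\<^sub>R ((1/\<theta>) *\<^sub>R u) + (1 - \<theta>) *\<^sub>R ((1/(1-\<theta>)) *\<^sub>R n)"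
    have "J v \<le> ereal (1 - (1 - \<theta>)) * J ((1/\<theta>) *\<^sub>R u) + ereal (1 - \<theta>) * J ((1/(1-\<theta>)) *\<^sub>R n)"
      unfolding v_def by (rule convex[unfolded convex_fun_def, rule_format]) (use \<theta> in auto)
    moreover have "v = u + n"
      using \<theta> by (simp add: v_def)
    ultimately show ?thesis
      using \<theta> n real by (simp add: abs_homogeneous_scaleR[OF hom] mult.assoc)
  qed
  obtain q where q: "J (u + n) = ereal q"
    using le[of "1/2"] convex_abs_homogeneous_nonneg[OF convex hom, of "u + n"]
    by (cases "J (u + n)") auto
  have "((\<lambda>\<theta>. \<theta> * (1/\<theta>) powr p * r) \<longlongrightarrow> 1 * (1/1) powr p * r) (at_left 1)"
    by (intro tendsto_intros tendsto_powr) auto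
  moreover have "eventually (\<lambda>\<theta>. q \<le> \<theta> * (1/\<theta>) powr p * r) (at_left 1)"
    using eventually_at_left_real[OF zero_less_one] by eventually_elim (use le q in auto)
  ultimately have "q \<le> r" by (intro tendsto_lowerbound) auto
  then show ?thesis using q real by simp
next
  case PInf
  then show ?thesis by simp
next
  case MInf
  then show ?thesis using convex_abs_homogeneous_nonneg[OF convex hom, of u] by simp
qed

lemma subdiff_orthogonal_null:
  assumes convex: "convex_fun J" and hom: "abs_homogeneous p J" and proper: "proper_fun J"
    and \<zeta>: "\<zeta> \<in> subdiff J u" and n: "J n = 0"
  shows "\<zeta> \<bullet> n = 0"
proof -
  obtain r where r: "J u = ereal r"
    using subdiff_imp_finite[OF proper \<zeta>] convex_abs_homogeneous_nonneg[OF convex hom, of u]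
    by (cases "J u") auto
  have "\<zeta> \<bullet> m \<le> 0" if "J m = 0" for m
  proof -
    have "J u + ereal (\<zeta> \<bullet> ((u + m) - u)) \<le> J (u + m)"
      using \<zeta> unfolding subdiff_def by blast
    also have "\<dots> \<le> J u" using abs_homogeneous_add_null_le[OF convex hom that] .
    finally show ?thesis using r by simp
  qed
  from this[of n] this[of "- n"] show ?thesis
    using n abs_homogeneous_uminus[OF hom, of n] by simp
qed

section \<open>Rayleigh quotient and ground states\<close>

lemma rayleigh_le_iff:
  assumes "v \<noteq> 0"
  shows "rayleigh p J v \<le> ereal l \<longleftrightarrow> ereal p * J v \<le> ereal (l * norm v powr p)"
  using assms by (simp add: rayleigh_def ereal_divide_le_pos mult.commute)

lemma le_rayleigh_iff:
  assumes "v \<noteq> 0"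
  shows "ereal l \<le> rayleigh p J v \<longleftrightarrow> ereal (l * norm v powr p) \<le> ereal p * J v"
  using assms by (simp add: rayleigh_def ereal_le_divide_pos mult.commute)

lemma rayleigh_scaleR:
  assumes "abs_homogeneous p J" and "c \<noteq> 0"
  shows "rayleigh p J (c *\<^sub>R v) = rayleigh p J v"
proof (cases "v = 0")
  case False
  have "0 < \<bar>c\<bar> powr p" "0 < norm v powr p" using assms(2) False by auto
  then show ?thesis
    using abs_homogeneous_scaleR[OF assms(1)]
    by (cases "J v") (auto simp: rayleigh_def powr_mult field_simps)
qed simp

lemma H0_scaleR:
  assumes "v \<in> H0 J" and "c \<noteq> 0"
  shows "c *\<^sub>R v \<in> H0 J"
  using assms by (simp add: H0_def orthogonal_comp_def orthogonal_def)

lemma ground_state_iff_rayleigh_le: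
  "ground_state p J v \<longleftrightarrow> v \<in> H0 J \<and> rayleigh p J v \<le> lambda1 p J"
  unfolding ground_state_def lambda1_def by (auto intro: antisym INF_lower)

lemma ground_state_scaleR:
  assumes "abs_homogeneous p J" and "ground_state p J v" and "c \<noteq> 0"
  shows "ground_state p J (c *\<^sub>R v)"
  using assms by (simp add: ground_state_def rayleigh_scaleR H0_scaleR)

lemma ground_state_limit:
  assumes lsc: "lsc_fun J" and p: "0 < p" and lambda1: "lambda1 p J = ereal l"
    and ground: "eventually (\<lambda>k. ground_state p J (w k) \<and> norm (w k) = r) sequentially"
    and lim: "w \<longlonglongrightarrow> w_star"
  shows "ground_state p J w_star"
proof -
  have "(\<lambda>k. norm (w k)) \<longlonglongrightarrow> r"
    using ground by (intro tendsto_eventually) (auto elim: eventually_mono)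
  then have norm_w_star: "norm w_star = r" by (rule LIMSEQ_unique[OF tendsto_norm[OF lim]])
  obtain k where "ground_state p J (w k)" "norm (w k) = r" using ground eventually_sequentially by auto
  then have "w_star \<noteq> 0" using norm_w_star by (auto simp: ground_state_def H0_def)
  have "n \<bullet> w_star = 0" if "J n = 0" for n
  proof -
    have "(\<lambda>k. n \<bullet> w k) \<longlonglongrightarrow> 0"
      using ground that
      by (intro tendsto_eventually) (auto simp: ground_state_def H0_def orthogonal_comp_def
          nullspace_J_def orthogonal_def elim: eventually_mono)
    then show ?thesis by (rule LIMSEQ_unique[OF tendsto_inner[OF tendsto_const lim]])
  qed
  with \<open>w_star \<noteq> 0\<close> have H0: "w_star \<in> H0 J"
    by (simp add: H0_def orthogonal_comp_def nullspace_J_def orthogonal_def)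
  \<comment> \<open>All w k with k large lie in one closed sublevel set of J.\<close>
  have "J v \<le> ereal (l * r powr p / p)" if "ground_state p J v" "norm v = r" for v
  proof -
    have "v \<noteq> 0" "rayleigh p J v \<le> ereal l"
      using that lambda1 by (auto simp: ground_state_def H0_def)
    then have "ereal p * J v \<le> ereal (l * r powr p)"
      using that(2) by (simp add: rayleigh_le_iff)
    then show ?thesis using p by (cases "J v") (auto simp: field_simps)
  qed
  then have "eventually (\<lambda>k. w k \<in> {v. J v \<le> ereal (l * r powr p / p)}) sequentially"
    using ground by (auto elim: eventually_mono)
  then have "w_star \<in> {v. J v \<le> ereal (l * r powr p / p)}"
    using lsc by (intro Lim_in_closed_set[OF _ _ _ lim]) (auto simp: lsc_fun_def)
  then have "rayleigh p J w_star \<le> lambda1 p J"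
    using p lambda1 norm_w_star \<open>w_star \<noteq> 0\<close>
    by (cases "J w_star") (auto simp: rayleigh_le_iff field_simps)
  with H0 show ?thesis by (simp add: ground_state_iff_rayleigh_le)
qed

section \<open>The subgradient flow\<close>

locale homogeneous_subgradient_flow =
  fixes J :: "'a::real_inner \<Rightarrow> ereal" and p :: real and u \<zeta> :: "real \<Rightarrow> 'a"
  assumes convex: "convex_fun J" and proper: "proper_fun J" and homogeneous: "abs_homogeneous p J"
    and continuous: "continuous_on {0..} u"
    and subgradient: "\<And>t. 0 < t \<Longrightarrow> \<zeta> t \<in> subdiff J (u t)"
    and flow: "\<And>t. 0 < t \<Longrightarrow> (u has_vector_derivative - \<zeta> t) (at t within {t..})"

lemma gradient_flow_solution_imp_subgradient_flow:
  assumes "convex_fun J" "proper_fun J" "abs_homogeneous p J" "gradient_flow_solution J f u"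
  obtains \<zeta> where "homogeneous_subgradient_flow J p u \<zeta>"
proof -
  have "\<forall>t. \<exists>\<zeta>. 0 < t \<longrightarrow>
      \<zeta> \<in> subdiff J (u t) \<and> (u has_vector_derivative - \<zeta>) (at t within {t..})"
    using assms(4) unfolding gradient_flow_solution_def min_norm_subgrad_def by blast
  from choice[OF this] obtain \<zeta> where "\<forall>t. 0 < t \<longrightarrow>
      \<zeta> t \<in> subdiff J (u t) \<and> (u has_vector_derivative - \<zeta> t) (at t within {t..})"
    by blast
  moreover have "continuous_on {0..} u" using assms(4) unfolding gradient_flow_solution_def by blast
  ultimately show ?thesis
    using assms(1-3) by (intro that[of \<zeta>]) (simp add: homogeneous_subgradient_flow_def)
qed

context homogeneous_subgradient_flow
begin

lemma J_flow_eq_ereal: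
  assumes "0 < t"
  shows "J (u t) = ereal (real_of_ereal (J (u t)))"
  using subdiff_imp_finite[OF proper subgradient[OF assms]]
    convex_abs_homogeneous_nonneg[OF convex homogeneous, of "u t"]
  by (cases "J (u t)") auto

lemma inner_flow_has_derivative:
  assumes "0 < t"
  shows "((\<lambda>s. v \<bullet> u s) has_real_derivative - (v \<bullet> \<zeta> t)) (at t within {t..})"
  using flow[OF assms]
  unfolding has_real_derivative_iff_has_vector_derivative has_vector_derivative_def
  by (auto intro!: derivative_eq_intros)

lemma inner_self_flow_has_derivative:
  assumes "0 < t"
  shows "((\<lambda>s. u s \<bullet> u s) has_real_derivative - 2 * (\<zeta> t \<bullet> u t)) (at t within {t..})"
  using flow[OF assms]
  unfolding has_real_derivative_iff_has_vector_derivative has_vector_derivative_def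
  by (auto intro!: derivative_eq_intros simp: inner_commute)

lemma inner_null_flow_const:
  assumes "0 \<le> t" and n: "J n = 0"
  shows "n \<bullet> u t = n \<bullet> u 0"
proof -
  have "m \<bullet> u t \<le> m \<bullet> u 0" if "J m = 0" for m
  proof (rule right_DERIV_nonpos_imp_nonincreasing[where g = "\<lambda>s. m \<bullet> u s"])
    show "continuous_on {0..t} (\<lambda>s. m \<bullet> u s)"
      by (intro continuous_intros continuous_on_subset[OF continuous]) auto
    fix s :: real assume "0 < s"
    moreover have "m \<bullet> \<zeta> s = 0"
      using subdiff_orthogonal_null[OF convex homogeneous proper subgradient[OF \<open>0 < s\<close>] that]
      by (simp add: inner_commute)
    ultimately show "\<exists>D. ((\<lambda>s. m \<bullet> u s) has_real_derivative D) (at s within {s..}) \<and> D \<le> 0"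
      using inner_flow_has_derivative[OF \<open>0 < s\<close>, of m] by auto
  qed (use assms in simp)
  from this[of n] this[of "- n"] show ?thesis
    using n abs_homogeneous_uminus[OF homogeneous, of n] by simp
qed

lemma flow_orthogonal_null:
  assumes "u 0 \<in> orthogonal_comp (nullspace_J J)" and "0 \<le> t"
  shows "u t \<in> orthogonal_comp (nullspace_J J)"
  using assms inner_null_flow_const[OF assms(2)]
  by (simp add: orthogonal_comp_def nullspace_J_def orthogonal_def)

lemma norm_flow_antimono:
  assumes "0 \<le> a" and "a \<le> b"
  shows "norm (u b) \<le> norm (u a)"
proof -
  have "u b \<bullet> u b \<le> u a \<bullet> u a"
  proof (rule right_DERIV_nonpos_imp_nonincreasing[where g = "\<lambda>s. u s \<bullet> u s"])
    show "continuous_on {a..b} (\<lambda>s. u s \<bullet> u s)"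
      by (intro continuous_intros continuous_on_subset[OF continuous]) (use assms in auto)
    fix s assume "a < s"
    then have "0 < s" using assms by simp
    have "J (u s) \<le> ereal (\<zeta> s \<bullet> u s)"
      using homogeneous subgradient[OF \<open>0 < s\<close>]
      by (intro subdiff_le_inner_self) (simp add: abs_homogeneous_def)
    then have "0 \<le> \<zeta> s \<bullet> u s"
      using order_trans[OF convex_abs_homogeneous_nonneg[OF convex homogeneous]] by fastforce
    with inner_self_flow_has_derivative[OF \<open>0 < s\<close>]
    show "\<exists>D. ((\<lambda>s. u s \<bullet> u s) has_real_derivative D) (at s within {s..}) \<and> D \<le> 0"
      by (intro exI[of _ "- 2 * (\<zeta> s \<bullet> u s)"]) simp
  qed (use assms in simp)
  then show ?thesis by (simp add: norm_eq_sqrt_inner)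
qed

lemma flow_nonzero_before_extinction:
  assumes "u 0 \<noteq> 0" and "0 \<le> t" and "t < extinction_time u"
  shows "u t \<noteq> 0"
proof
  assume "u t = 0"
  have "u s = 0" if "t \<le> s" for s
    using norm_flow_antimono[OF \<open>0 \<le> t\<close> that] \<open>u t = 0\<close> by simp
  moreover have "t \<noteq> 0" using \<open>u t = 0\<close> assms(1) by auto
  ultimately have "t \<in> {T. T > 0 \<and> (\<forall>s\<ge>T. u s = 0)}" using assms(2) by auto
  then have "extinction_time u \<le> t"
    unfolding extinction_time_def by (rule cInf_lower) (auto intro: bdd_belowI[of _ 0])
  then show False using assms(3) by simp
qed

lemma norm_powr_flow_has_derivative:
  assumes "0 < t" and "u t \<noteq> 0"
  shows "((\<lambda>s. norm (u s) powr r) has_real_derivative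
           - r * (\<zeta> t \<bullet> u t) * norm (u t) powr (r - 2)) (at t within {t..})"
proof -
  have norm_powr: "norm v powr s = (v \<bullet> v) powr (s / 2)" for v :: 'a and s
    by (simp add: norm_eq_sqrt_inner powr_half_sqrt[symmetric] powr_powr)
  from DERIV_chain2[OF has_real_derivative_powr[of _ "r / 2"] inner_self_flow_has_derivative[OF assms(1)]]
  have "((\<lambda>s. (u s \<bullet> u s) powr (r / 2)) has_real_derivative
          r / 2 * (u t \<bullet> u t) powr (r / 2 - 1) * (- 2 * (\<zeta> t \<bullet> u t)))
          (at t within {t..})"
    using assms(2) by simp
  moreover have "(u t \<bullet> u t) powr (r / 2 - 1) = norm (u t) powr (r - 2)"
    by (simp add: norm_powr diff_divide_distrib)
  ultimately show ?thesis by (simp add: norm_powr mult_ac)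
qed

lemma flow_in_H0:
  assumes "u 0 \<in> H0 J" and "0 \<le> t" and "t < extinction_time u"
  shows "u t \<in> H0 J"
  using assms flow_orthogonal_null flow_nonzero_before_extinction by (simp add: H0_def)

lemma rayleigh_bound_le_inner_subgradient:
  assumes "ereal l \<le> lambda1 p J" and "u 0 \<in> H0 J" and "0 < t" and "t < extinction_time u"
  shows "l * norm (u t) powr p \<le> \<zeta> t \<bullet> u t"
proof -
  have H0: "u t \<in> H0 J" using flow_in_H0 assms(2-4) by simp
  then have "ereal (l * norm (u t) powr p) \<le> ereal p * J (u t)"
    using order_trans[OF assms(1) INF_lower[OF H0, of "rayleigh p J", folded lambda1_def]]
    by (simp add: le_rayleigh_iff H0_def)
  also have "\<dots> \<le> ereal (\<zeta> t \<bullet> u t)"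
    using subdiff_euler_ineq[OF homogeneous subgradient J_flow_eq_ereal] \<open>0 < t\<close>
    by (subst J_flow_eq_ereal) auto
  finally show ?thesis by simp
qed

definition lyapunov :: "real \<Rightarrow> real \<Rightarrow> real" where
  "lyapunov l s = norm (u s) powr (2 - p) + (2 - p) * l * s"

lemma lyapunov_has_derivative:
  assumes "0 < t" and "u t \<noteq> 0"
  shows "(lyapunov l has_real_derivative (2 - p) * (l - (\<zeta> t \<bullet> u t) / norm (u t) powr p))
           (at t within {t..})"
proof -
  have "((\<lambda>s. (2 - p) * l * s) has_real_derivative (2 - p) * l) (at t within {t..})"
    by (auto intro!: derivative_eq_intros)
  from DERIV_add[OF norm_powr_flow_has_derivative[OF assms, of "2 - p"] this]
  show ?thesis
    unfolding lyapunov_def[abs_def]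
    by (rule DERIV_cong) (use assms(2) in \<open>simp add: powr_minus_divide field_simps\<close>)
qed

lemma lyapunov_antimono:
  assumes p: "p < 2" and l: "ereal l \<le> lambda1 p J" and f: "u 0 \<in> H0 J"
    and ab: "0 \<le> a" "a \<le> b" "b \<le> extinction_time u"
  shows "lyapunov l b \<le> lyapunov l a"
proof (rule right_DERIV_nonpos_imp_nonincreasing[where g = "lyapunov l"])
  show "continuous_on {a..b} (lyapunov l)"
    unfolding lyapunov_def[abs_def] using p ab
    by (intro continuous_intros continuous_on_powr' continuous_on_subset[OF continuous]) auto
  fix s assume "a < s" "s < b"
  then have "0 < s" "s < extinction_time u" using ab by auto
  then have "u s \<noteq> 0" using flow_in_H0[OF f] by (simp add: H0_def)
  have "l \<le> (\<zeta> s \<bullet> u s) / norm (u s) powr p"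
    using rayleigh_bound_le_inner_subgradient[OF l f \<open>0 < s\<close> \<open>s < extinction_time u\<close>]
      \<open>u s \<noteq> 0\<close>
    by (simp add: field_simps)
  then show "\<exists>D. (lyapunov l has_real_derivative D) (at s within {s..}) \<and> D \<le> 0"
    using lyapunov_has_derivative[OF \<open>0 < s\<close> \<open>u s \<noteq> 0\<close>] p
    by (intro exI conjI) (auto intro: mult_nonneg_nonpos)
qed (use ab in simp)

lemma lyapunov_const_if_extinction_time_minimal:
  assumes p: "p < 2" and l: "lambda1 p J = ereal l" and f: "u 0 \<in> H0 J"
    and T: "norm (u 0) powr (2 - p) = (2 - p) * l * extinction_time u"
    and s: "0 \<le> s" "s \<le> extinction_time u"
  shows "lyapunov l s = (2 - p) * l * extinction_time u"
  using lyapunov_antimono[OF p eq_refl[OF l[symmetric]] f, of 0 s]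
    lyapunov_antimono[OF p eq_refl[OF l[symmetric]] f, of s "extinction_time u"] s T
    powr_ge_zero[of "norm (u (extinction_time u))" "2 - p"]
  unfolding lyapunov_def by linarith

lemma flow_ground_state_if_extinction_time_minimal:
  assumes p: "p < 2" and l: "lambda1 p J = ereal l" and f: "u 0 \<in> H0 J"
    and T: "norm (u 0) powr (2 - p) = (2 - p) * l * extinction_time u"
    and t: "0 < t" "t < extinction_time u"
  shows "ground_state p J (u t)"
proof -
  define T where "T = extinction_time u"
  have "u t \<in> H0 J" using flow_in_H0[OF f] t by simp
  then have "u t \<noteq> 0" by (simp add: H0_def)
  have "(lyapunov l has_real_derivative 0) (at t within {t..})"
  proof (rule has_field_derivative_transform_within)
    show "((\<lambda>s. (2 - p) * l * T) has_real_derivative 0) (at t within {t..})" by simp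
    show "(2 - p) * l * T = lyapunov l s" if "s \<in> {t..}" "dist s t < T - t" for s
      using lyapunov_const_if_extinction_time_minimal[OF p l f T, of s] that t
      by (simp add: dist_real_def T_def)
  qed (use t in \<open>simp_all add: T_def\<close>)
  with lyapunov_has_derivative[OF t(1) \<open>u t \<noteq> 0\<close>, of l]
  have "(2 - p) * (l - (\<zeta> t \<bullet> u t) / norm (u t) powr p) = 0"
    by (rule has_field_derivative_unique) (simp add: at_within_Ici_at_right)
  then have "l = (\<zeta> t \<bullet> u t) / norm (u t) powr p" using p by simp
  then have "ereal p * J (u t) \<le> ereal (l * norm (u t) powr p)"
    using subdiff_euler_ineq[OF homogeneous subgradient J_flow_eq_ereal] t \<open>u t \<noteq> 0\<close>
    by (subst J_flow_eq_ereal) auto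
  with \<open>u t \<in> H0 J\<close> \<open>u t \<noteq> 0\<close> l show ?thesis
    by (simp add: ground_state_iff_rayleigh_le rayleigh_le_iff)
qed

lemma norm_flow_if_extinction_time_minimal:
  assumes p: "p < 2" and l: "lambda1 p J = ereal l" and f: "u 0 \<in> H0 J"
    and T: "norm (u 0) powr (2 - p) = (2 - p) * l * extinction_time u"
    and t: "0 \<le> t" "t < extinction_time u"
  shows "norm (u t) = norm (u 0) * (1 - t / extinction_time u) powr (1 / (2 - p))"
proof -
  define T where "T = extinction_time u"
  have "norm (u t) = (norm (u t) powr (2 - p)) powr (1 / (2 - p))"
    using p by (simp add: powr_powr)
  also have "norm (u t) powr (2 - p) = (2 - p) * l * (T - t)"
    using lyapunov_const_if_extinction_time_minimal[OF p l f T, of t] t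
    by (simp add: lyapunov_def T_def algebra_simps)
  also have "(2 - p) * l * (T - t) = (2 - p) * l * T * (1 - t / T)"
    using t by (simp add: T_def field_simps)
  also have "(2 - p) * l * T = norm (u 0) powr (2 - p)"
    using T by (simp add: T_def)
  also have "(norm (u 0) powr (2 - p) * (1 - t / T)) powr (1 / (2 - p))
      = norm (u 0) * (1 - t / T) powr (1 / (2 - p))"
    using p t by (simp add: powr_mult powr_powr T_def)
  finally show ?thesis by (simp add: T_def)
qed

end

theorem corollary7:
  fixes J :: "'a::{real_inner, complete_space} \<Rightarrow> ereal"
    and p :: real and f w_star :: 'a and u :: "real \<Rightarrow> 'a"
  assumes p: "1 \<le> p" "p < 2"
    and J: "convex_fun J" "lsc_fun J" "proper_fun J" "dense_domain J" "abs_homogeneous p J"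
    and coercive: "lambda1 p J > 0"
    and f: "f \<in> H0 J"
    and sol: "gradient_flow_solution J f u"
    and Tex: "extinction_time u = norm f powr (2 - p) / ((2 - p) * real_of_ereal (lambda1 p J))"
    and profile: "\<exists>t :: nat \<Rightarrow> real. incseq t \<and> (\<forall>k. 0 \<le> t k \<and> t k < extinction_time u) \<and>
        t \<longlonglongrightarrow> extinction_time u \<and>
        (\<lambda>k. (1 / (1 - t k / extinction_time u) powr (1 / (2 - p))) *\<^sub>R u (t k)) \<longlonglongrightarrow> w_star"
  shows "ground_state p J w_star"
proof -
  obtain \<zeta> where "homogeneous_subgradient_flow J p u \<zeta>"
    using gradient_flow_solution_imp_subgradient_flow[OF J(1,3,5) sol] .
  then interpret homogeneous_subgradient_flow J p u \<zeta> .
  define T where "T = extinction_time u"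
  define a where "a s = (1 - s / T) powr (1 / (2 - p))" for s
  obtain t where t: "\<And>k. 0 \<le> t k \<and> t k < T" "t \<longlonglongrightarrow> T"
    and w: "(\<lambda>k. (1 / a (t k)) *\<^sub>R u (t k)) \<longlonglongrightarrow> w_star"
    using profile unfolding T_def a_def by blast
  have "0 < T" using t(1) by (meson le_less_trans)
  then obtain l where l: "lambda1 p J = ereal l" and "l \<noteq> 0"
    using Tex coercive by (cases "lambda1 p J") (auto simp: T_def)
  have u0: "u 0 = f" using sol by (simp add: gradient_flow_solution_def)
  have T_eq: "norm (u 0) powr (2 - p) = (2 - p) * l * T"
    using Tex l p \<open>l \<noteq> 0\<close> by (simp add: T_def u0 field_simps)
  have "eventually (\<lambda>k. 0 < t k) sequentially" using order_tendstoD(1)[OF t(2) \<open>0 < T\<close>] .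
  then have "eventually (\<lambda>k. ground_state p J ((1 / a (t k)) *\<^sub>R u (t k))
      \<and> norm ((1 / a (t k)) *\<^sub>R u (t k)) = norm f) sequentially"
  proof eventually_elim
    case (elim k)
    have "0 < a (t k)" using t(1)[of k] \<open>0 < T\<close> by (simp add: a_def)
    then show ?case
      using flow_ground_state_if_extinction_time_minimal[OF p(2) l _ T_eq[unfolded T_def] elim]
        norm_flow_if_extinction_time_minimal[OF p(2) l _ T_eq[unfolded T_def]]
        t(1)[of k] f J(5) by (auto simp: u0 a_def T_def ground_state_scaleR)
  qed
  then show ?thesis using ground_state_limit[OF J(2) _ l _ w] p by simp
qed

end
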